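(* Let $m\ge2$, $n\ge1$, $k\ge1$ an integer, and $\mathcal{A}=(a_{i_1i_2\cdots i_m})\in\mathbb{R}_+^{[m,n]}$ with $r_i(\mathcal{A})\neq0$ for all $i\in[n]$. Then \[\min_{i\in[n]}\frac{r_i(\mathcal{A}^{k+1})}{(r_i(\mathcal{A}^k))^{m-1}}\le\rho(\mathcal{A})\le\max_{i\in[n]}\frac{r_i(\mathcal{A}^{k+1})}{(r_i(\mathcal{A}^k))^{m-1}}.\]
   Context: $[n]=\{1,\ldots,n\}$. $\mathbb{R}_+^{[m,n]}$ denotes the set of order $m$, dimension $n$ tensors $\mathcal{A}=(a_{i_1\cdots i_m})$, $i_j\in[n]$, with nonnegative real entries. For a tensor $\mathcal{T}=(t_{i_1\cdots i_p})$ of order $p$ and dimension $n$, $r_i(\mathcal{T})=\sum_{i_2,\ldots,i_p=1}^n|t_{ii_2\cdots i_p}|$. General product: for $\mathcal{A}$ of order $m\ge2$ and $\mathcal{B}$ of order $q\ge1$ (dimension $n$), $\mathcal{A}\mathcal{B}=(c_{i\alpha_1\cdots\alpha_{m-1}})$ is the order $(m-1)(q-1)+1$, dimension $n$ tensor with $c_{i\alpha_1\cdots\alpha_{m-1}}=\sum_{i_2,\ldots,i_m=1}^n a_{ii_2\cdots i_m}b_{i_2\alpha_1}\cdots b_{i_m\alpha_{m-1}}$, $i\in[n]$, $\alpha_j\in[n]^{q-1}$ (where $b_{j\alpha}$ with $\alpha=(j_2,\ldots,j_q)$ means $b_{jj_2\cdots j_q}$). Powers: $\mathcal{A}^1=\mathcal{A}$,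 $\mathcal{A}^{j+1}=\mathcal{A}\mathcal{A}^j$. Eigenvalues: $\lambda\in\mathbb{C}$ is an eigenvalue of $\mathcal{A}$ if there is a nonzero $x\in\mathbb{C}^n$ with $\sum_{i_2,\ldots,i_m=1}^n a_{ii_2\cdots i_m}x_{i_2}\cdots x_{i_m}=\lambda x_i^{m-1}$ for all $i\in[n]$; $\rho(\mathcal{A})$ is the maximum modulus of the eigenvalues of $\mathcal{A}$. *)

theory Defs
  imports Complex_Main
begin

text \<open>Tensors of order p and dimension n are represented as functions
  from index lists (of length p, entries in {0..<n}, i.e. [n] shifted to 0-based)
  to scalars. Entries outside this index domain are irrelevant.\<close>

definition idx :: "nat \<Rightarrow> nat \<Rightarrow> nat list set" where
  "idx n p = {xs. length xs = p \<and> set xs \<subseteq> {..<n}}"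

definition rsum :: "nat \<Rightarrow> nat \<Rightarrow> (nat list \<Rightarrow> real) \<Rightarrow> nat \<Rightarrow> real" where
  "rsum n p T i = (\<Sum>xs\<in>idx n (p - 1). \<bar>T (i # xs)\<bar>)"

text \<open>General product AB, A of order m, B of order q (dimension n). The result has
  order (m-1)(q-1)+1; its index list is i followed by alpha_1 ... alpha_{m-1},
  each alpha_j of length q-1.\<close>
definition tprod :: "nat \<Rightarrow> nat \<Rightarrow> nat \<Rightarrow> (nat list \<Rightarrow> real) \<Rightarrow> (nat list \<Rightarrow> real) \<Rightarrow> (nat list \<Rightarrow> real)" where
  "tprod n m q A B = (\<lambda>ix.
     (\<Sum>is\<in>idx n (m - 1). A (hd ix # is) *
        (\<Prod>j<m - 1. B ((is ! j) # take (q - 1) (drop (j * (q - 1)) (tl ix))))))"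

text \<open>Order of A^k when A has order m.\<close>
fun tord :: "nat \<Rightarrow> nat \<Rightarrow> nat" where
  "tord m 0 = m"
| "tord m (Suc 0) = m"
| "tord m (Suc (Suc j)) = (m - 1) * (tord m (Suc j) - 1) + 1"

text \<open>Powers: A^1 = A, A^(j+1) = A A^j. (A^0 is not used; set to A.)\<close>
fun tpow :: "nat \<Rightarrow> nat \<Rightarrow> (nat list \<Rightarrow> real) \<Rightarrow> nat \<Rightarrow> (nat list \<Rightarrow> real)" where
  "tpow n m A 0 = A"
| "tpow n m A (Suc 0) = A"
| "tpow n m A (Suc (Suc j)) = tprod n m (tord m (Suc j)) A (tpow n m A (Suc j))"

definition is_eigenvalue :: "nat \<Rightarrow> nat \<Rightarrow> (nat list \<Rightarrow> real) \<Rightarrow> complex \<Rightarrow> bool" where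
  "is_eigenvalue n m A l \<longleftrightarrow> (\<exists>x :: nat \<Rightarrow> complex. (\<exists>i<n. x i \<noteq> 0) \<and>
     (\<forall>i<n. (\<Sum>is\<in>idx n (m - 1). complex_of_real (A (i # is)) * (\<Prod>j<m - 1. x (is ! j)))
            = l * x i ^ (m - 1)))"

definition spec_radius :: "nat \<Rightarrow> nat \<Rightarrow> (nat list \<Rightarrow> real) \<Rightarrow> real" where
  "spec_radius n m A = Sup (cmod ` {l. is_eigenvalue n m A l})"

end

theory Submission
  imports Defs "HOL-Analysis.Brouwer_Fixpoint" "HOL-Homology.Brouwer_Degree"
begin

text \<open>
  Put d_i = r_i(A^k) > 0. Since r_i(A^(k+1)) = (A d^(m-1))_i, the bounds concern the ratios
  R_i = (A d^(m-1))_i / d_i^(m-1).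
  For the upper bound, take an eigenvector x of an eigenvalue \<lambda> and an index i maximising
  |x_i| / d_i; the i-th eigen-equation gives |\<lambda>| \<le> R_i.
  For the lower bound, the rescaled tensor B = D^-(m-1) A D with D = diag d has row sums R_i.
  Brouwer's theorem, applied on the standard simplex to y \<mapsto> (B y^(m-1) + \<epsilon>)^(1/(m-1))
  normalised, yields positive \<epsilon>-perturbed eigenpairs of B whose eigenvalues are at least
  min R and bounded above; by compactness \<epsilon> \<rightarrow> 0 gives a nonnegative eigenpair of B, hence of A,
  with eigenvalue at least min R. Since vectors are functions nat \<Rightarrow> real, Brouwer's theorem is
  derived from the non-contractibility of spheres.
\<close>

section \<open>Brouwer's fixed point theorem on the standard simplex\<close>

lemma continuous_on_coordinate [continuous_intros]:
  "continuous_on S (\<lambda>x. x i :: 'b::topological_space)"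
  by (rule continuous_on_subset[OF continuous_on_product_coordinates]) simp

lemma continuous_on_component:
  "continuous_on S f \<Longrightarrow> continuous_on S (\<lambda>x. f x i :: 'b::topological_space)"
  by (rule continuous_on_compose2[OF continuous_on_coordinate]) auto

definition unit_disc :: "nat \<Rightarrow> (nat \<Rightarrow> real) set" where
  "unit_disc N = {x. (\<forall>i\<ge>N. x i = 0) \<and> (\<Sum>i<N. (x i)\<^sup>2) \<le> 1}"

definition unit_sphere :: "nat \<Rightarrow> (nat \<Rightarrow> real) set" where
  "unit_sphere N = {x. (\<forall>i\<ge>N. x i = 0) \<and> (\<Sum>i<N. (x i)\<^sup>2) = 1}"

lemma nsphere_eq_unit_sphere: "nsphere M = top_of_set (unit_sphere (Suc M))"
proof -
  have "{x. (\<Sum>i\<le>M. (x i)\<^sup>2) = 1 \<and> (\<forall>i>M. x i = 0)} = unit_sphere (Suc M)"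
    by (auto simp: unit_sphere_def lessThan_Suc_atMost Suc_le_eq)
  then show ?thesis
    by (simp add: nsphere euclidean_product_topology)
qed

lemma not_contractible_unit_sphere: "N \<ge> 1 \<Longrightarrow> \<not> contractible (unit_sphere N)"
  using non_contractible_space_nsphere[of "N - 1"] by (simp add: nsphere_eq_unit_sphere)

lemma contractible_unit_disc: "contractible (unit_disc N)"
proof -
  let ?h = "\<lambda>z::real \<times> (nat \<Rightarrow> real). \<lambda>i. (1 - fst z) * snd z i"
  have "continuous_on ({0..1} \<times> unit_disc N) ?h"
    by (intro continuous_intros continuous_on_compose2[OF continuous_on_coordinate continuous_on_snd]) auto
  moreover have "?h \<in> {0..1} \<times> unit_disc N \<rightarrow> unit_disc N"
  proof (clarsimp simp: unit_disc_def)
    fix t :: real and x :: "nat \<Rightarrow> real" assume t: "0 \<le> t" "t \<le> 1" and x: "(\<Sum>i<N. (x i)\<^sup>2) \<le> 1"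
    have "(\<Sum>i<N. ((1 - t) * x i)\<^sup>2) = (1 - t)\<^sup>2 * (\<Sum>i<N. (x i)\<^sup>2)"
      by (simp add: power_mult_distrib sum_distrib_left)
    also have "\<dots> \<le> 1" using t x by (intro mult_le_one power_le_one sum_nonneg) auto
    finally show "(\<Sum>i<N. ((1 - t) * x i)\<^sup>2) \<le> 1" .
  qed
  ultimately show ?thesis
    unfolding contractible_def by (subst homotopic_with) (auto intro!: exI[of _ ?h])
qed

lemma ray_exit_root:
  fixes a b \<nu> :: real
  assumes "a \<le> 1" "\<nu> > 0"
  shows "a + 2 * ((sqrt (b\<^sup>2 + \<nu> * (1 - a)) - b) / \<nu>) * b
           + ((sqrt (b\<^sup>2 + \<nu> * (1 - a)) - b) / \<nu>)\<^sup>2 * \<nu> = 1"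
proof -
  have "(sqrt (b\<^sup>2 + \<nu> * (1 - a)))\<^sup>2 = b\<^sup>2 + \<nu> * (1 - a)" using assms by simp
  then show ?thesis using assms by (simp add: field_simps power2_eq_square)
qed

lemma unit_sphere_retract_of_unit_disc:
  assumes contf: "continuous_on (unit_disc N) f" and f: "f \<in> unit_disc N \<rightarrow> unit_disc N"
    and no_fix: "\<forall>x\<in>unit_disc N. f x \<noteq> x"
  shows "unit_sphere N retract_of unit_disc N"
proof -
  define ip where "ip a b = (\<Sum>i<N. a i * b i)" for a b :: "nat \<Rightarrow> real"
  define u where "u x = (\<lambda>i. x i - f x i)" for x
  \<comment> \<open>s x is the root t \<ge> 0 of |x + t u x| = 1: the ray from f x through x leaves the disc at r x\<close>
  define s where "s x = (sqrt ((ip x (u x))\<^sup>2 + ip (u x) (u x) * (1 - ip x x)) - ip x (u x))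
                          / ip (u x) (u x)" for x
  define r where "r x = (\<lambda>i. x i + s x * u x i)" for x
  have ip_self: "ip a a = (\<Sum>i<N. (a i)\<^sup>2)" for a by (simp add: ip_def power2_eq_square)
  have ip_self_ge: "ip a a \<ge> 0" for a unfolding ip_self by (intro sum_nonneg) auto
  have ip_u_pos: "ip (u x) (u x) > 0" if x: "x \<in> unit_disc N" for x
  proof (rule ccontr)
    assume "\<not> ?thesis"
    then have "(\<Sum>i<N. (u x i)\<^sup>2) = 0"
      using ip_self_ge[of "u x"] by (simp add: ip_self)
    then have "\<forall>i<N. u x i = 0" by (simp add: sum_nonneg_eq_0_iff)
    moreover have "f x \<in> unit_disc N" using f x by blast
    ultimately have "f x i = x i" for i
      using x by (cases "i < N") (auto simp: u_def unit_disc_def)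
    with no_fix x show False by (auto simp: fun_eq_iff)
  qed
  have r_sphere: "r x \<in> unit_sphere N" if x: "x \<in> unit_disc N" for x
  proof -
    have "ip (r x) (r x) = ip x x + 2 * s x * ip x (u x) + (s x)\<^sup>2 * ip (u x) (u x)"
      by (simp add: ip_def r_def sum.distrib sum_distrib_left power2_eq_square algebra_simps)
    also have "\<dots> = 1"
      using x ip_u_pos[OF x] unfolding s_def
      by (intro ray_exit_root) (auto simp: ip_self unit_disc_def)
    finally show ?thesis
      using x f by (auto simp: unit_sphere_def unit_disc_def ip_self r_def u_def)
  qed
  have r_fixes_sphere: "r x = x" if x: "x \<in> unit_sphere N" for x
  proof -
    have xD: "x \<in> unit_disc N" and a1: "ip x x = 1" using x by (auto simp: unit_sphere_def unit_disc_def ip_self)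
    have "ip (f x) (f x) \<le> 1" using f xD by (auto simp: unit_disc_def ip_self)
    moreover have "0 \<le> ip (u x) (u x)" by (rule ip_self_ge)
    moreover have "ip (u x) (u x) = ip x x - 2 * ip x (f x) + ip (f x) (f x)"
      by (simp add: ip_def u_def power2_eq_square sum_subtractf sum.distrib sum_distrib_left algebra_simps)
    moreover have "ip x (u x) = ip x x - ip x (f x)"
      by (simp add: ip_def u_def algebra_simps sum_subtractf)
    ultimately have "ip x (u x) \<ge> 0" using a1 by linarith
    then have "s x = 0" using a1 by (simp add: s_def)
    then show ?thesis by (simp add: r_def)
  qed
  have cont_u: "continuous_on (unit_disc N) (\<lambda>x. u x i)" for i
    unfolding u_def by (intro continuous_intros continuous_on_component[OF contf])
  have cont_ip: "continuous_on (unit_disc N) (\<lambda>x. ip (g x) (h x))"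
    if "\<And>i. continuous_on (unit_disc N) (\<lambda>x. g x i)" "\<And>i. continuous_on (unit_disc N) (\<lambda>x. h x i)" for g h
    unfolding ip_def by (intro continuous_intros that)
  have "continuous_on (unit_disc N) s"
    unfolding s_def by (intro continuous_intros cont_ip cont_u) (auto dest: ip_u_pos)
  then have "continuous_on (unit_disc N) r"
    unfolding r_def by (intro continuous_intros cont_u)
  moreover have "unit_sphere N \<subseteq> unit_disc N" by (auto simp: unit_sphere_def unit_disc_def)
  ultimately show ?thesis
    unfolding retract_of_def retraction_def using r_sphere r_fixes_sphere by blast
qed

theorem brouwer_unit_disc:
  assumes "N \<ge> 1" "continuous_on (unit_disc N) f" "f \<in> unit_disc N \<rightarrow> unit_disc N"
  shows "\<exists>x\<in>unit_disc N. f x = x"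
  using retract_of_contractible[OF contractible_unit_disc unit_sphere_retract_of_unit_disc[OF assms(2,3)]]
    not_contractible_unit_sphere[OF assms(1)] by blast

definition std_simplex :: "nat \<Rightarrow> (nat \<Rightarrow> real) set" where
  "std_simplex n = {y. (\<forall>i\<ge>n. y i = 0) \<and> (\<forall>i<n. 0 \<le> y i) \<and> (\<Sum>i<n. y i) = 1}"

lemma std_simplex_le_one: "y \<in> std_simplex n \<Longrightarrow> i < n \<Longrightarrow> y i \<le> 1"
  unfolding std_simplex_def using member_le_sum[of i "{..<n}" y] by auto

lemma std_simplex_subset_unit_disc: "std_simplex n \<subseteq> unit_disc n"
proof
  fix y assume y: "y \<in> std_simplex n"
  have "(\<Sum>i<n. (y i)\<^sup>2) \<le> (\<Sum>i<n. y i)"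
    using y std_simplex_le_one[OF y] by (intro sum_mono) (auto simp: std_simplex_def power2_eq_square mult_left_le)
  then show "y \<in> unit_disc n" using y by (simp add: std_simplex_def unit_disc_def)
qed

lemma std_simplex_retract_of_unit_disc:
  assumes "n \<ge> 1"
  shows "std_simplex n retract_of unit_disc n"
proof -
  \<comment> \<open>take positive parts and spread any deficit of total mass evenly, then normalise\<close>
  define v where "v x i = max (x i) 0 + max (1 - (\<Sum>j<n. max (x j) 0)) 0 / real n" for x i
  define V where "V x = (\<Sum>i<n. v x i)" for x
  define \<rho> where "\<rho> x = (\<lambda>i. if i < n then v x i / V x else 0)" for x
  have V_eq: "V x = (\<Sum>j<n. max (x j) 0) + max (1 - (\<Sum>j<n. max (x j) 0)) 0" for x
    using assms by (simp add: V_def v_def sum.distrib)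
  have V_ge: "V x \<ge> 1" for x unfolding V_eq by linarith
  have "(\<Sum>i<n. \<rho> x i) = 1" for x
    using V_ge[of x] by (simp add: \<rho>_def V_def flip: sum_divide_distrib)
  then have into: "\<rho> x \<in> std_simplex n" for x
    using V_ge[of x] by (auto simp: std_simplex_def \<rho>_def v_def)
  have \<rho>_fix: "\<rho> y = y" if y: "y \<in> std_simplex n" for y
  proof -
    have "max (y i) 0 = y i" if "i < n" for i using y that by (simp add: std_simplex_def)
    moreover from this have "V y = 1" using y by (simp add: V_eq std_simplex_def)
    ultimately show ?thesis using y by (auto simp: \<rho>_def v_def std_simplex_def fun_eq_iff)
  qed
  have cont_v: "continuous_on UNIV (\<lambda>x. v x i)" for i
    unfolding v_def using assms by (intro continuous_intros) auto
  have "continuous_on UNIV V"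
    unfolding V_def by (intro continuous_intros cont_v)
  moreover have "V x \<noteq> 0" for x using V_ge[of x] by linarith
  ultimately have "continuous_on UNIV (\<lambda>x. \<rho> x i)" for i
    by (cases "i < n") (auto simp: \<rho>_def intro!: continuous_intros cont_v)
  then have "continuous_on UNIV \<rho>"
    by (rule continuous_on_coordinatewise_then_product)
  then show ?thesis
    unfolding retract_of_def retraction_def
    using into \<rho>_fix std_simplex_subset_unit_disc by (blast intro: continuous_on_subset)
qed

theorem brouwer_std_simplex:
  assumes "n \<ge> 1" "continuous_on (std_simplex n) g" "g \<in> std_simplex n \<rightarrow> std_simplex n"
  shows "\<exists>y\<in>std_simplex n. g y = y"
  using retract_fixpoint_property[OF std_simplex_retract_of_unit_disc[OF assms(1)]
      brouwer_unit_disc[OF assms(1)] assms(2,3)] by blast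

lemma idx_0 [simp]: "idx n 0 = {[]}"
  by (auto simp: idx_def)

lemma idx_nth_less: "xs \<in> idx n p \<Longrightarrow> j < p \<Longrightarrow> xs ! j < n"
  unfolding idx_def by (auto dest: nth_mem)

lemma Cons_in_idx_Suc [simp]: "i # xs \<in> idx n (Suc p) \<longleftrightarrow> i < n \<and> xs \<in> idx n p"
  by (auto simp: idx_def)

lemma idx_add: "idx n (P + L) = (\<lambda>(zs, ws). zs @ ws) ` (idx n P \<times> idx n L)"
proof
  show "idx n (P + L) \<subseteq> (\<lambda>(zs, ws). zs @ ws) ` (idx n P \<times> idx n L)"
  proof
    fix ys assume "ys \<in> idx n (P + L)"
    then have "(take P ys, drop P ys) \<in> idx n P \<times> idx n L"
      by (auto simp: idx_def dest: in_set_takeD in_set_dropD)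
    then show "ys \<in> (\<lambda>(zs, ws). zs @ ws) ` (idx n P \<times> idx n L)"
      by (metis (no_types, lifting) append_take_drop_id case_prod_conv image_eqI)
  qed
qed (auto simp: idx_def)

lemma inj_on_append_idx: "inj_on (\<lambda>(zs, ws). zs @ ws) (idx n P \<times> idx n L)"
  by (auto simp: inj_on_def idx_def)

lemma chunk_in_idx: "ys \<in> idx n (a * P) \<Longrightarrow> j < a \<Longrightarrow> take P (drop (j * P) ys) \<in> idx n P"
proof -
  assume ys: "ys \<in> idx n (a * P)" and j: "j < a"
  have "j * P + P \<le> a * P" using j by (metis add.commute mult_Suc mult_le_mono1 Suc_leI)
  then have "length (take P (drop (j * P) ys)) = P" using ys by (simp add: idx_def)
  moreover have "set (take P (drop (j * P) ys)) \<subseteq> set ys"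
    by (meson order.trans set_drop_subset set_take_subset)
  ultimately show ?thesis using ys by (auto simp: idx_def)
qed

lemma sum_idx_prod_chunks:
  fixes f :: "nat \<Rightarrow> nat list \<Rightarrow> real"
  shows "(\<Sum>ys\<in>idx n (a * P). \<Prod>j<a. f j (take P (drop (j * P) ys))) = (\<Prod>j<a. \<Sum>zs\<in>idx n P. f j zs)"
proof (induction a arbitrary: f)
  case 0
  then show ?case by simp
next
  case (Suc a)
  have "(\<Sum>ys\<in>idx n (Suc a * P). \<Prod>j<Suc a. f j (take P (drop (j * P) ys)))
      = (\<Sum>(zs, ws)\<in>idx n P \<times> idx n (a * P). \<Prod>j<Suc a. f j (take P (drop (j * P) (zs @ ws))))"
    unfolding mult_Suc idx_add by (subst sum.reindex[OF inj_on_append_idx]) (simp add: case_prod_unfold)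
  also have "\<dots> = (\<Sum>(zs, ws)\<in>idx n P \<times> idx n (a * P). f 0 zs * (\<Prod>j<a. f (Suc j) (take P (drop (j * P) ws))))"
    by (intro sum.cong refl) (auto simp: idx_def prod.lessThan_Suc_shift simp del: prod.lessThan_Suc)
  also have "\<dots> = (\<Sum>zs\<in>idx n P. f 0 zs) * (\<Sum>ws\<in>idx n (a * P). \<Prod>j<a. f (Suc j) (take P (drop (j * P) ws)))"
    by (simp add: sum.cartesian_product[symmetric] sum_distrib_left sum_distrib_right) (rule sum.swap)
  also have "\<dots> = (\<Prod>j<Suc a. \<Sum>zs\<in>idx n P. f j zs)"
    using Suc.IH[of "\<lambda>j. f (Suc j)"] by (simp only: prod.lessThan_Suc_shift)
  finally show ?case .
qed

section \<open>Multilinear forms, products and powers of tensors\<close>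

text \<open>tapply n p B y i is the i-th entry of the paper's B y^p, for a tensor B of order p + 1.\<close>
definition tapply :: "nat \<Rightarrow> nat \<Rightarrow> (nat list \<Rightarrow> real) \<Rightarrow> (nat \<Rightarrow> real) \<Rightarrow> nat \<Rightarrow> real" where
  "tapply n p B y i = (\<Sum>xs\<in>idx n p. B (i # xs) * (\<Prod>j<p. y (xs ! j)))"

lemma tapply_cong: "(\<And>j. j < n \<Longrightarrow> y j = z j) \<Longrightarrow> tapply n p B y i = tapply n p B z i"
  unfolding tapply_def by (intro sum.cong refl arg_cong2[where f = "(*)"] prod.cong) (auto dest: idx_nth_less)

lemma tapply_const: "tapply n p B (\<lambda>_. a) i = a ^ p * tapply n p B (\<lambda>_. 1) i"
  by (simp add: tapply_def sum_distrib_left mult.commute)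

lemma tapply_mono:
  assumes "\<forall>xs\<in>idx n (Suc p). 0 \<le> B xs" "i < n" "\<And>j. j < n \<Longrightarrow> 0 \<le> y j \<and> y j \<le> z j"
  shows "tapply n p B y i \<le> tapply n p B z i"
  unfolding tapply_def using assms idx_nth_less
  by (intro sum_mono mult_left_mono prod_mono) auto

lemma tapply_nonneg:
  assumes "\<forall>xs\<in>idx n (Suc p). 0 \<le> B xs" "i < n" "\<And>j. j < n \<Longrightarrow> 0 \<le> y j"
  shows "0 \<le> tapply n p B y i"
  unfolding tapply_def using assms idx_nth_less
  by (intro sum_nonneg mult_nonneg_nonneg prod_nonneg) auto

lemma continuous_on_tapply [continuous_intros]: "continuous_on S (\<lambda>y. tapply n p B y i)"
  unfolding tapply_def by (intro continuous_intros)

lemma tapply_one_eq_rsum: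
  assumes "\<forall>xs\<in>idx n (Suc p). 0 \<le> B xs" "i < n"
  shows "tapply n p B (\<lambda>_. 1) i = rsum n (Suc p) B i"
  unfolding tapply_def rsum_def using assms by (intro sum.cong) auto

lemma tprod_nonneg:
  assumes "m \<ge> 1" "q \<ge> 1" "\<forall>xs\<in>idx n m. 0 \<le> A xs" "\<forall>xs\<in>idx n q. 0 \<le> B xs"
    and "i < n" "ys \<in> idx n ((m - 1) * (q - 1))"
  shows "0 \<le> tprod n m q A B (i # ys)"
proof -
  have A: "\<forall>xs\<in>idx n (Suc (m - 1)). 0 \<le> A xs" and B: "\<forall>xs\<in>idx n (Suc (q - 1)). 0 \<le> B xs"
    using assms(1-4) by simp_all
  have "0 \<le> B (xs ! j # take (q - 1) (drop (j * (q - 1)) ys))"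
    if "xs \<in> idx n (m - 1)" "j < m - 1" for xs j
    using B chunk_in_idx[OF assms(6) that(2)] idx_nth_less[OF that] by auto
  moreover have "0 \<le> A (i # xs)" if "xs \<in> idx n (m - 1)" for xs
    using A assms(5) that by auto
  ultimately show ?thesis
    unfolding tprod_def by (intro sum_nonneg mult_nonneg_nonneg prod_nonneg) auto
qed

lemma rsum_tprod:
  assumes "m \<ge> 1" "q \<ge> 1" "\<forall>xs\<in>idx n m. 0 \<le> A xs" and B: "\<forall>xs\<in>idx n q. 0 \<le> B xs" and "i < n"
  shows "rsum n ((m - 1) * (q - 1) + 1) (tprod n m q A B) i = tapply n (m - 1) A (rsum n q B) i"
proof -
  have "rsum n ((m - 1) * (q - 1) + 1) (tprod n m q A B) i
      = (\<Sum>ys\<in>idx n ((m - 1) * (q - 1)). tprod n m q A B (i # ys))"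
    unfolding rsum_def using tprod_nonneg[OF assms] by (intro sum.cong) auto
  also have "\<dots> = (\<Sum>xs\<in>idx n (m - 1). A (i # xs) * (\<Sum>ys\<in>idx n ((m - 1) * (q - 1)).
        \<Prod>j<m - 1. B (xs ! j # take (q - 1) (drop (j * (q - 1)) ys))))"
    unfolding tprod_def by (simp add: sum_distrib_left) (rule sum.swap)
  also have "\<dots> = (\<Sum>xs\<in>idx n (m - 1). A (i # xs) * (\<Prod>j<m - 1. rsum n q B (xs ! j)))"
  proof (intro sum.cong refl arg_cong2[where f = "(*)"])
    fix xs assume xs: "xs \<in> idx n (m - 1)"
    have Bq: "\<forall>xs\<in>idx n (Suc (q - 1)). 0 \<le> B xs" using B \<open>q \<ge> 1\<close> by simp
    have "rsum n q B (xs ! j) = (\<Sum>zs\<in>idx n (q - 1). B (xs ! j # zs))" if "j < m - 1" for j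
      unfolding rsum_def using Bq idx_nth_less[OF xs that] by (intro sum.cong refl) auto
    then show "(\<Sum>ys\<in>idx n ((m - 1) * (q - 1)). \<Prod>j<m - 1. B (xs ! j # take (q - 1) (drop (j * (q - 1)) ys)))
        = (\<Prod>j<m - 1. rsum n q B (xs ! j))"
      using sum_idx_prod_chunks[where f = "\<lambda>j zs. B (xs ! j # zs)" and a = "m - 1" and P = "q - 1"] by simp
  qed
  finally show ?thesis by (simp add: tapply_def)
qed

lemma tord_ge_1: "m \<ge> 1 \<Longrightarrow> tord m k \<ge> 1"
  by (induction m k rule: tord.induct) auto

lemma tord_Suc: "k \<ge> 1 \<Longrightarrow> tord m (Suc k) = (m - 1) * (tord m k - 1) + 1"
  by (cases k) auto

lemma tpow_Suc: "k \<ge> 1 \<Longrightarrow> tpow n m A (Suc k) = tprod n m (tord m k) A (tpow n m A k)"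
  by (cases k) auto

lemma tpow_nonneg:
  assumes "m \<ge> 1" "\<forall>xs\<in>idx n m. 0 \<le> A xs" "k \<ge> 1"
  shows "\<forall>xs\<in>idx n (tord m k). 0 \<le> tpow n m A k xs"
  using assms(3)
proof (induction k rule: dec_induct)
  case base
  then show ?case using assms by simp
next
  case (step k)
  show ?case
  proof
    fix xs assume "xs \<in> idx n (tord m (Suc k))"
    then obtain i ys where "xs = i # ys" "i < n" "ys \<in> idx n ((m - 1) * (tord m k - 1))"
      using tord_Suc[OF step(1)] by (cases xs) (auto simp: idx_def)
    then show "0 \<le> tpow n m A (Suc k) xs"
      using tprod_nonneg[OF assms(1) tord_ge_1[OF assms(1)] assms(2) step(3)] tpow_Suc[OF step(1)] by simp
  qed
qed

lemma rsum_tpow_Suc: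
  assumes "m \<ge> 1" "\<forall>xs\<in>idx n m. 0 \<le> A xs" "k \<ge> 1" "i < n"
  shows "rsum n (tord m (Suc k)) (tpow n m A (Suc k)) i = tapply n (m - 1) A (rsum n (tord m k) (tpow n m A k)) i"
  unfolding tord_Suc[OF assms(3)] tpow_Suc[OF assms(3)]
  using rsum_tprod[OF assms(1) tord_ge_1[OF assms(1)] assms(2) tpow_nonneg[OF assms(1-3)] assms(4)] .

lemma rsum_nonneg: "0 \<le> rsum n p T i"
  unfolding rsum_def by (intro sum_nonneg) auto

lemma rsum_tpow_pos:
  assumes m: "m \<ge> 1" and A: "\<forall>xs\<in>idx n m. 0 \<le> A xs" and r: "\<forall>i<n. rsum n m A i \<noteq> 0" and "k \<ge> 1"
  shows "\<forall>i<n. 0 < rsum n (tord m k) (tpow n m A k) i"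
  using \<open>k \<ge> 1\<close>
proof (induction k rule: dec_induct)
  case base
  show ?case using r rsum_nonneg[of n m A] by (simp add: order_less_le)
next
  case (step k)
  have A': "\<forall>xs\<in>idx n (Suc (m - 1)). 0 \<le> A xs" using A m by simp
  define d where "d = rsum n (tord m k) (tpow n m A k)"
  show ?case
  proof (intro allI impI)
    fix i assume i: "i < n"
    have fin: "finite (d ` {..<n})" "d ` {..<n} \<noteq> {}" using i by auto
    define a where "a = Min (d ` {..<n})"
    have a: "0 < a" "\<forall>j<n. a \<le> d j"
      using Min_in[OF fin] step(3) fin by (auto simp: a_def d_def)
    have "0 < a ^ (m - 1) * rsum n m A i"
      using a r i rsum_nonneg[of n m A i] by (simp add: order_less_le)
    also have "\<dots> = tapply n (m - 1) A (\<lambda>_. a) i"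
    proof -
      have "tapply n (m - 1) A (\<lambda>_. 1) i = rsum n m A i" using tapply_one_eq_rsum[OF A' i] m by simp
      then show ?thesis by (simp only: tapply_const[of n "m - 1" A a])
    qed
    also have "\<dots> \<le> tapply n (m - 1) A d i"
      using a by (intro tapply_mono[OF A' i]) auto
    also have "\<dots> = rsum n (tord m (Suc k)) (tpow n m A (Suc k)) i"
      unfolding d_def by (rule rsum_tpow_Suc[OF m A step(1) i, symmetric])
    finally show "0 < rsum n (tord m (Suc k)) (tpow n m A (Suc k)) i" .
  qed
qed

section \<open>Nonnegative eigenpairs\<close>

lemma lower_row_sum_bound_le_eigenvalue:
  assumes B: "\<forall>xs\<in>idx n (Suc p). 0 \<le> B xs" and n: "n \<ge> 1"
    and c: "\<And>i. i < n \<Longrightarrow> c \<le> tapply n p B (\<lambda>_. 1) i"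
    and y: "\<And>i. i < n \<Longrightarrow> 0 < y i"
    and eq: "\<And>i. i < n \<Longrightarrow> tapply n p B y i \<le> \<mu> * y i ^ p"
  shows "c \<le> \<mu>"
proof -
  have fin: "finite (y ` {..<n})" "y ` {..<n} \<noteq> {}" using n by (auto simp: lessThan_empty_iff)
  obtain i where i: "i < n" "y i = Min (y ` {..<n})" using Min_in[OF fin] by auto
  have "y i ^ p * c \<le> y i ^ p * tapply n p B (\<lambda>_. 1) i"
    using c y[OF i(1)] i(1) by (intro mult_left_mono) auto
  also have "\<dots> = tapply n p B (\<lambda>_. y i) i" by (rule tapply_const[symmetric])
  also have "\<dots> \<le> tapply n p B y i"
    using fin i y by (intro tapply_mono[OF B]) (auto intro: less_imp_le)
  also have "\<dots> \<le> y i ^ p * \<mu>" using eq[OF i(1)] by (simp add: mult.commute)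
  finally show ?thesis using y[OF i(1)] by simp
qed

lemma eigenvalue_le_max_row_sum_add:
  assumes B: "\<forall>xs\<in>idx n (Suc p). 0 \<le> B xs" and y: "y \<in> std_simplex n" and "e \<ge> 0"
    and eq: "\<And>i. i < n \<Longrightarrow> \<mu> * y i ^ p \<le> tapply n p B y i + e"
  shows "\<mu> \<le> Max (tapply n p B (\<lambda>_. 1) ` {..<n}) + e * real n ^ p"
proof -
  have "n \<noteq> 0" using y by (cases n) (auto simp: std_simplex_def)
  then have fin: "finite (y ` {..<n})" "y ` {..<n} \<noteq> {}" by auto
  obtain i where i: "i < n" "y i = Max (y ` {..<n})" using Max_in[OF fin] by auto
  have y_le: "y j \<le> y i" if "j < n" for j using fin i that by auto
  have y_nonneg: "0 \<le> y j" if "j < n" for j using y that by (simp add: std_simplex_def)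
  have "1 = (\<Sum>j<n. y j)" using y by (simp add: std_simplex_def)
  also have "\<dots> \<le> real n * y i" using sum_mono[of "{..<n}" y "\<lambda>_. y i"] y_le by simp
  finally have ny: "1 \<le> real n * y i" .
  then have yi: "y i > 0" using y_nonneg[OF i(1)] by (cases "y i = 0") auto
  have "\<mu> * y i ^ p \<le> tapply n p B (\<lambda>_. y i) i + e"
    using eq[OF i(1)] tapply_mono[OF B i(1), of y "\<lambda>_. y i"] y_le y_nonneg by simp
  also have "\<dots> \<le> y i ^ p * Max (tapply n p B (\<lambda>_. 1) ` {..<n}) + e"
    using i yi by (subst tapply_const) (auto intro!: mult_left_mono)
  finally have "\<mu> \<le> Max (tapply n p B (\<lambda>_. 1) ` {..<n}) + e / y i ^ p"
    using yi by (simp add: field_simps)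
  moreover have "e / y i ^ p \<le> e * real n ^ p"
  proof -
    have "1 / y i \<le> real n" using ny yi by (simp add: field_simps)
    then have "(1 / y i) ^ p \<le> real n ^ p" using yi by (intro power_mono) auto
    then have "e * (1 / y i ^ p) \<le> e * real n ^ p"
      using \<open>e \<ge> 0\<close> by (intro mult_left_mono) (simp_all add: power_one_over)
    then show ?thesis by simp
  qed
  ultimately show ?thesis by linarith
qed

lemma exists_perturbed_eigenpair:
  assumes n: "n \<ge> 1" and p: "p \<ge> 1" and B: "\<forall>xs\<in>idx n (Suc p). 0 \<le> B xs" and "\<epsilon> > 0"
  shows "\<exists>y\<in>std_simplex n. \<exists>\<mu>. (\<forall>i<n. 0 < y i) \<and> (\<forall>i<n. tapply n p B y i + \<epsilon> = \<mu> * y i ^ p)"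
proof -
  define w where "w y i = root p (tapply n p B y i + \<epsilon>)" for y i
  define W where "W y = (\<Sum>j<n. w y j)" for y
  define g where "g y = (\<lambda>i. if i < n then w y i / W y else 0)" for y
  have T_nonneg: "0 \<le> tapply n p B y i" if "y \<in> std_simplex n" "i < n" for y i
    using that by (intro tapply_nonneg[OF B]) (auto simp: std_simplex_def)
  have w_pos: "0 < w y i" if "y \<in> std_simplex n" "i < n" for y i
    using T_nonneg[OF that] \<open>\<epsilon> > 0\<close> p by (simp add: w_def)
  have W_pos: "0 < W y" if "y \<in> std_simplex n" for y
    unfolding W_def using w_pos[OF that] n by (intro sum_pos) (auto simp: lessThan_empty_iff)
  have "g \<in> std_simplex n \<rightarrow> std_simplex n"
  proof
    fix y assume y: "y \<in> std_simplex n"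
    have "(\<Sum>i<n. g y i) = 1" using W_pos[OF y] by (simp add: g_def W_def flip: sum_divide_distrib)
    then show "g y \<in> std_simplex n"
      using w_pos[OF y] W_pos[OF y] by (auto simp: std_simplex_def g_def less_imp_le)
  qed
  moreover have "continuous_on (std_simplex n) g"
  proof (rule continuous_on_coordinatewise_then_product)
    fix i
    have "continuous_on (std_simplex n) W" unfolding W_def w_def by (intro continuous_intros)
    then show "continuous_on (std_simplex n) (\<lambda>y. g y i)"
      by (cases "i < n") (auto simp: g_def w_def intro!: continuous_intros dest!: W_pos)
  qed
  ultimately obtain y where y: "y \<in> std_simplex n" and g_fix: "g y = y"
    using brouwer_std_simplex[OF n] by blast
  have y_eq: "y i = w y i / W y" if "i < n" for i using g_fix that by (metis g_def)
  have "tapply n p B y i + \<epsilon> = W y ^ p * y i ^ p" if i: "i < n" for i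
  proof -
    have "tapply n p B y i + \<epsilon> = w y i ^ p"
      unfolding w_def using T_nonneg[OF y i] \<open>\<epsilon> > 0\<close> p by (simp add: real_root_pow_pos2)
    also have "\<dots> = (W y * y i) ^ p" using y_eq[OF i] W_pos[OF y] by simp
    finally show ?thesis by (simp add: power_mult_distrib)
  qed
  moreover have "0 < y i" if "i < n" for i using y_eq[OF that] w_pos[OF y that] W_pos[OF y] by simp
  ultimately show ?thesis using y by blast
qed

lemma compact_Int_Inter_decseq:
  fixes F :: "nat \<Rightarrow> 'a::topological_space set"
  assumes "compact K" "\<And>N. closed (F N)" "decseq F" "\<And>N. K \<inter> F N \<noteq> {}"
  shows "K \<inter> (\<Inter>N. F N) \<noteq> {}"
proof (rule compact_imp_fip_image[OF assms(1,2)])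
  fix I :: "nat set" assume "finite I"
  then have "F (Max (insert 0 I)) \<subseteq> F N" if "N \<in> I" for N
    using \<open>decseq F\<close> that by (simp add: decseq_def)
  then have "F (Max (insert 0 I)) \<subseteq> (\<Inter>N\<in>I. F N)" by blast
  then show "K \<inter> (\<Inter>N\<in>I. F N) \<noteq> {}" using assms(4) by blast
qed

lemma eq_zero_if_abs_le_inverse_Suc:
  fixes x :: real
  assumes "\<And>N. \<bar>x\<bar> \<le> 1 / real (Suc N)"
  shows "x = 0"
proof (rule ccontr)
  assume "x \<noteq> 0"
  then obtain N where "inverse (real (Suc N)) < \<bar>x\<bar>" using reals_Archimedean[of "\<bar>x\<bar>"] by auto
  with assms[of N] show False by (simp add: inverse_eq_divide)
qed

lemma exists_bounded_perturbed_eigenpair: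
  assumes n: "n \<ge> 1" and p: "p \<ge> 1" and B: "\<forall>xs\<in>idx n (Suc p). 0 \<le> B xs"
    and c: "\<And>i. i < n \<Longrightarrow> c \<le> tapply n p B (\<lambda>_. 1) i" and "0 < \<epsilon>" "\<epsilon> \<le> 1"
  shows "\<exists>y\<in>std_simplex n. \<exists>\<mu>\<in>{c..Max (tapply n p B (\<lambda>_. 1) ` {..<n}) + real n ^ p}.
           \<forall>i<n. tapply n p B y i + \<epsilon> = \<mu> * y i ^ p"
proof -
  obtain y \<mu> where y: "y \<in> std_simplex n" "\<forall>i<n. 0 < y i"
    and eq: "\<forall>i<n. tapply n p B y i + \<epsilon> = \<mu> * y i ^ p"
    using exists_perturbed_eigenpair[OF n p B \<open>0 < \<epsilon>\<close>] by auto
  have "tapply n p B y i \<le> \<mu> * y i ^ p" if "i < n" for i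
    using eq[rule_format, OF that] \<open>0 < \<epsilon>\<close> by linarith
  then have "c \<le> \<mu>" using y(2) by (intro lower_row_sum_bound_le_eigenvalue[OF B n c]) auto
  moreover have "\<mu> \<le> Max (tapply n p B (\<lambda>_. 1) ` {..<n}) + \<epsilon> * real n ^ p"
    using eq \<open>0 < \<epsilon>\<close> by (intro eigenvalue_le_max_row_sum_add[OF B y(1)]) auto
  moreover have "\<epsilon> * real n ^ p \<le> real n ^ p" using \<open>0 < \<epsilon>\<close> \<open>\<epsilon> \<le> 1\<close> by (simp add: mult_left_le_one_le)
  ultimately show ?thesis using y(1) eq by fastforce
qed

lemma exists_nonneg_eigenpair:
  assumes n: "n \<ge> 1" and p: "p \<ge> 1" and B: "\<forall>xs\<in>idx n (Suc p). 0 \<le> B xs"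
    and c: "\<And>i. i < n \<Longrightarrow> c \<le> tapply n p B (\<lambda>_. 1) i"
  shows "\<exists>y\<in>std_simplex n. \<exists>\<mu>\<ge>c. \<forall>i<n. tapply n p B y i = \<mu> * y i ^ p"
proof -
  define C where "C = Max (tapply n p B (\<lambda>_. 1) ` {..<n}) + real n ^ p"
  \<comment> \<open>a candidate eigenvalue is stored in coordinate n, which tapply does not read\<close>
  define box where "box i = (if i < n then {0..1} else if i = n then {c..C} else {0::real})" for i
  define err where "err z i = tapply n p B z i - z n * z i ^ p" for z i
  define F where "F N = {z. (\<Sum>i<n. z i) = 1 \<and> (\<forall>i<n. \<bar>err z i\<bar> \<le> 1 / real (Suc N))}" for N
  have "compact (PiE UNIV box)"
    using compactin_PiE[of "\<lambda>_. euclideanreal" UNIV box]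
    by (simp add: box_def euclidean_product_topology compactin_euclidean_iff)
  moreover have "closed (F N)" for N
  proof -
    have "F N = {z. (\<Sum>i<n. z i) = 1} \<inter> (\<Inter>i<n. {z. \<bar>err z i\<bar> \<le> 1 / real (Suc N)})"
      by (auto simp: F_def)
    then show ?thesis
      unfolding err_def by (auto intro!: closed_Int closed_INT closed_Collect_eq closed_Collect_le continuous_intros)
  qed
  moreover have "decseq F"
    unfolding decseq_def F_def by (auto intro: order.trans[OF _ frac_le[of 1]])
  moreover have "PiE UNIV box \<inter> F N \<noteq> {}" for N
  proof -
    obtain y \<mu> where y: "y \<in> std_simplex n" and "c \<le> \<mu>" "\<mu> \<le> C"
      and eq: "\<forall>i<n. tapply n p B y i + 1 / real (Suc N) = \<mu> * y i ^ p"
      using exists_bounded_perturbed_eigenpair[OF n p B c, of "1 / real (Suc N)"] by (auto simp: C_def)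
    then have "y(n := \<mu>) \<in> PiE UNIV box"
      using y std_simplex_le_one[OF y] by (auto simp: box_def std_simplex_def)
    moreover have "y(n := \<mu>) \<in> F N"
    proof -
      have "tapply n p B (y(n := \<mu>)) i = tapply n p B y i" for i by (rule tapply_cong) simp
      moreover have "\<bar>tapply n p B y i - \<mu> * y i ^ p\<bar> = 1 / real (Suc N)" if "i < n" for i
        using eq[rule_format, OF that] by (metis abs_minus_commute abs_of_pos add_diff_cancel_left' of_nat_0_less_iff zero_less_Suc zero_less_divide_1_iff)
      ultimately show ?thesis using y by (simp add: F_def err_def std_simplex_def)
    qed
    ultimately show ?thesis by blast
  qed
  ultimately have "PiE UNIV box \<inter> (\<Inter>N. F N) \<noteq> {}" by (rule compact_Int_Inter_decseq)
  then obtain z where z: "z \<in> PiE UNIV box" "\<And>N. z \<in> F N" by blast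
  have z_box: "z i \<in> box i" for i using z(1) by (auto simp: PiE_iff)
  have "err z i = 0" if "i < n" for i
    using z(2) that by (intro eq_zero_if_abs_le_inverse_Suc) (auto simp: F_def)
  moreover have "tapply n p B (z(n := 0)) i = tapply n p B z i" for i by (rule tapply_cong) simp
  ultimately have "\<forall>i<n. tapply n p B (z(n := 0)) i = z n * (z(n := 0)) i ^ p"
    by (simp add: err_def)
  moreover have "z(n := 0) \<in> std_simplex n"
  proof -
    have "z i = 0" if "i > n" for i using z_box[of i] that by (simp add: box_def)
    moreover have "0 \<le> z i" if "i < n" for i using z_box[of i] that by (simp add: box_def)
    ultimately show ?thesis using z(2)[of 0] by (auto simp: std_simplex_def F_def)
  qed
  moreover have "c \<le> z n" using z_box[of n] by (simp add: box_def)
  ultimately show ?thesis by blast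
qed

section \<open>Eigenvalue bounds\<close>

lemma eigenvalue_norm_le_max_ratio:
  assumes A: "\<forall>xs\<in>idx n m. 0 \<le> A xs" and "m \<ge> 1" and d: "\<forall>i<n. 0 < d i"
    and eig: "is_eigenvalue n m A l"
  shows "\<exists>i<n. cmod l \<le> tapply n (m - 1) A d i / d i ^ (m - 1)"
proof -
  define p where "p = m - 1"
  have A': "\<forall>xs\<in>idx n (Suc p). 0 \<le> A xs" using A \<open>m \<ge> 1\<close> by (simp add: p_def)
  obtain x where "\<exists>i<n. x i \<noteq> 0"
    and eq: "\<forall>i<n. (\<Sum>is\<in>idx n p. complex_of_real (A (i # is)) * (\<Prod>j<p. x (is ! j))) = l * x i ^ p"
    using eig unfolding is_eigenvalue_def p_def by blast
  then obtain i1 where i1: "i1 < n" "x i1 \<noteq> 0" by blast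
  define z where "z i = cmod (x i) / d i" for i
  have fin: "finite (z ` {..<n})" "z ` {..<n} \<noteq> {}" using i1 by auto
  obtain i where i: "i < n" "z i = Max (z ` {..<n})" using Max_in[OF fin] by auto
  define t where "t = z i"
  have x_le: "cmod (x j) \<le> t * d j" if "j < n" for j
  proof -
    have "z j \<le> t" using Max_ge[OF fin(1), of "z j"] i that by (simp add: t_def)
    then show ?thesis using d that by (simp add: z_def divide_le_eq)
  qed
  have "0 < z i1" using i1 d by (simp add: z_def)
  then have t_pos: "0 < t" using fin i i1 unfolding t_def by (metis Max_ge image_eqI lessThan_iff order_less_le_trans)
  have x_i: "cmod (x i) = t * d i" using d i(1) by (auto simp: t_def z_def)
  have "cmod l * (t * d i) ^ p = cmod (l * x i ^ p)" by (simp add: norm_mult norm_power x_i)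
  also have "\<dots> = cmod (\<Sum>is\<in>idx n p. complex_of_real (A (i # is)) * (\<Prod>j<p. x (is ! j)))"
    using eq i(1) by simp
  also have "\<dots> \<le> (\<Sum>is\<in>idx n p. A (i # is) * (\<Prod>j<p. cmod (x (is ! j))))"
    using A' i(1) by (intro order.trans[OF norm_sum] sum_mono) (simp add: norm_mult prod_norm)
  also have "\<dots> \<le> tapply n p A (\<lambda>j. t * d j) i"
    unfolding tapply_def using A' i x_le idx_nth_less by (intro sum_mono mult_left_mono prod_mono) auto
  also have "\<dots> = t ^ p * tapply n p A d i"
    by (simp add: tapply_def prod.distrib sum_distrib_left algebra_simps)
  finally have "cmod l * d i ^ p \<le> tapply n p A d i"
    using t_pos by (simp add: power_mult_distrib mult.assoc mult.left_commute[of "t ^ p"])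
  then show ?thesis using d i(1) by (auto simp: p_def field_simps)
qed

lemma is_eigenvalue_of_real_eigenvector:
  assumes "\<exists>i<n. x i \<noteq> 0" "\<forall>i<n. tapply n (m - 1) A x i = \<mu> * x i ^ (m - 1)"
  shows "is_eigenvalue n m A (complex_of_real \<mu>)"
  unfolding is_eigenvalue_def
proof (intro exI[of _ "\<lambda>i. complex_of_real (x i)"] conjI allI impI)
  fix i assume "i < n"
  then show "(\<Sum>is\<in>idx n (m - 1). complex_of_real (A (i # is)) * (\<Prod>j<m - 1. complex_of_real (x (is ! j))))
      = complex_of_real \<mu> * complex_of_real (x i) ^ (m - 1)"
    using assms(2) by (simp add: tapply_def flip: of_real_prod of_real_mult of_real_sum of_real_power)
qed (use assms(1) in auto)

lemma exists_eigenvalue_ge_min_ratio: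
  assumes n: "n \<ge> 1" and m: "m \<ge> 2" and A: "\<forall>xs\<in>idx n m. 0 \<le> A xs" and d: "\<forall>i<n. 0 < d i"
    and c: "\<forall>i<n. c \<le> tapply n (m - 1) A d i / d i ^ (m - 1)"
  shows "\<exists>\<mu>\<ge>c. is_eigenvalue n m A (complex_of_real \<mu>)"
proof -
  define p where "p = m - 1"
  have p: "p \<ge> 1" using m by (simp add: p_def)
  have A': "\<forall>xs\<in>idx n (Suc p). 0 \<le> A xs" using A m by (simp add: p_def)
  \<comment> \<open>the diagonal similarity D^(-p) A D with D = diag d turns the ratios into row sums\<close>
  define B where "B xs = A xs * (\<Prod>j<p. d (tl xs ! j)) / d (hd xs) ^ p" for xs
  have B_tapply: "tapply n p B y i = tapply n p A (\<lambda>j. d j * y j) i / d i ^ p" for y i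
    unfolding tapply_def B_def by (simp add: sum_divide_distrib prod.distrib algebra_simps)
  have "\<forall>xs\<in>idx n (Suc p). 0 \<le> B xs"
  proof
    fix xs assume xs: "xs \<in> idx n (Suc p)"
    then obtain i ys where "xs = i # ys" "i < n" "ys \<in> idx n p" by (cases xs) (auto simp: idx_def)
    then show "0 \<le> B xs"
      using A' d idx_nth_less by (auto simp: B_def less_imp_le intro!: divide_nonneg_pos mult_nonneg_nonneg prod_nonneg)
  qed
  moreover have "c \<le> tapply n p B (\<lambda>_. 1) i" if "i < n" for i
    using c that unfolding B_tapply by (simp add: p_def)
  ultimately obtain y \<mu> where y: "y \<in> std_simplex n" and "c \<le> \<mu>"
    and eq: "\<forall>i<n. tapply n p B y i = \<mu> * y i ^ p"
    using exists_nonneg_eigenpair[OF n p] by blast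
  have "\<exists>i<n. d i * y i \<noteq> 0"
  proof (rule ccontr)
    assume "\<not> ?thesis"
    then have "\<forall>i<n. y i = 0" using d by force
    then have "(\<Sum>i<n. y i) = 0" by simp
    with y show False by (simp add: std_simplex_def)
  qed
  moreover have "tapply n p A (\<lambda>j. d j * y j) i = \<mu> * (d i * y i) ^ p" if "i < n" for i
    using eq B_tapply[of y i] d[rule_format, OF that] that by (simp add: power_mult_distrib field_simps)
  ultimately have "is_eigenvalue n m A (complex_of_real \<mu>)"
    by (intro is_eigenvalue_of_real_eigenvector[where x = "\<lambda>j. d j * y j"]) (auto simp: p_def)
  with \<open>c \<le> \<mu>\<close> show ?thesis by blast
qed

theorem theorem3p4:
  fixes m n k :: nat and A :: "nat list \<Rightarrow> real"
  assumes "m \<ge> 2" and "n \<ge> 1" and "k \<ge> 1"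
    and "\<forall>xs\<in>idx n m. A xs \<ge> 0"
    and "\<forall>i<n. rsum n m A i \<noteq> 0"
  shows "(MIN i\<in>{..<n}. rsum n (tord m (k + 1)) (tpow n m A (k + 1)) i
             / (rsum n (tord m k) (tpow n m A k) i) ^ (m - 1)) \<le> spec_radius n m A
       \<and> spec_radius n m A \<le> (MAX i\<in>{..<n}. rsum n (tord m (k + 1)) (tpow n m A (k + 1)) i
             / (rsum n (tord m k) (tpow n m A k) i) ^ (m - 1))"
proof -
  have m: "m \<ge> 1" using assms(1) by simp
  define d where "d = rsum n (tord m k) (tpow n m A k)"
  define R where "R i = rsum n (tord m (k + 1)) (tpow n m A (k + 1)) i / d i ^ (m - 1)" for i
  define S where "S = cmod ` {l. is_eigenvalue n m A l}"
  have d_pos: "\<forall>i<n. 0 < d i" using rsum_tpow_pos[OF m assms(4,5,3)] by (simp add: d_def)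
  have R_eq: "R i = tapply n (m - 1) A d i / d i ^ (m - 1)" if "i < n" for i
    using rsum_tpow_Suc[OF m assms(4,3) that] by (simp add: R_def d_def)
  have fin: "finite (R ` {..<n})" "R ` {..<n} \<noteq> {}" using assms(2) by (auto simp: lessThan_empty_iff)
  obtain \<mu> where "Min (R ` {..<n}) \<le> \<mu>" "is_eigenvalue n m A (complex_of_real \<mu>)"
    using exists_eigenvalue_ge_min_ratio[OF assms(2,1,4) d_pos] fin R_eq by (metis Min_le image_eqI lessThan_iff)
  then have "Min (R ` {..<n}) \<le> \<bar>\<mu>\<bar>" "\<bar>\<mu>\<bar> \<in> S" by (auto simp: S_def image_iff)
  moreover have "\<forall>s\<in>S. s \<le> Max (R ` {..<n})"
    using eigenvalue_norm_le_max_ratio[OF assms(4) m d_pos] fin R_eq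
    by (fastforce simp: S_def intro: order.trans[OF _ Max_ge])
  ultimately have "Min (R ` {..<n}) \<le> Sup S" "Sup S \<le> Max (R ` {..<n})"
    by (auto intro!: order.trans[OF _ cSup_upper] cSup_least simp: bdd_above_def)
  then show ?thesis by (simp add: spec_radius_def S_def R_def d_def)
qed

end
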